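(* Let $\mathbf V$ be a finite-dimensional real Lie algebra with basis $(v^i)$ and bracket $[v^i,v^j]=C^{ij}_k v^k$, and let $\langle h^1\rangle\oplus\mathbf V$ be the central extension $$[h^1,v]=0\ \ \forall v\in\mathbf V,\qquad [v^i,v^j]=\Omega_0^{ij}h^1+C^{ij}_kv^k,\tag{E}$$ where $\Omega_0=(\Omega_0^{ij})$ is an antisymmetric matrix defining a Lie algebra 2-cocycle of $\mathbf V$. Let $\alpha,\beta$ be two commuting derivations of $\mathbf V$, and denote also by $\alpha,\beta$ their matrices $(\alpha^i_j)$, $(\beta^i_j)$ defined by $\alpha(v^i)=\alpha^i_jv^j$, $\beta(v^i)=\beta^i_jv^j$. Let $\tilde G=\langle h_1\rangle\oplus\mathbf V^*$ be the Lie group with product $(t h_1,\xi)\ast(t'h_1,\xi')=\big((t+t')h_1,\ e^{t\alpha^*}\xi'+e^{-t'\beta^*}\xi\big)$, equipped with the Lie bialgebra cocycle $\delta$ on its Lie algebra whose dual $\delta^*$ is the bracket (E) on $\langle h^1\rangle\oplus\mathbf V$. Then the global Poisson–Lie bracket on $\tilde G$ with cocycle $\delta$ is given, in the coordinate functions $h^1,v^i$, by $$\{h^1,v^j\}=0\ \ \forall j,\qquad \{v^i,v^j\}=\Omega^{ij}(h^1)+C^{ij}_kv^k,$$ where the matrix $\Omega(h^1)=(\Omega^{ij}(h^1))$ is $$\Omega(h^1)=\exp(-h^1\beta)\left(\int_0^{h^1}\exp\big(s(\alpha+\beta)\big)\,\Omega_0\,\big(\exp(s(\alpha+\beta))\big)^{t}\,ds\right)\big(\exp(-h^1\beta)\big)^{t},$$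 with ${}^t$ denoting matrix transposition.
   Context: Summation over repeated indices is assumed. $\alpha^*,\beta^*$ are the dual (transpose) maps on $\mathbf V^*$. The coordinate functions on $\tilde G$ are $h^1$ (with $h^1(th_1,\xi)=t$) and the elements $v^i\in\mathbf V=(\mathbf V^* )^*$ viewed as linear functions on $\mathbf V^*$. In these coordinates the group law gives the coproduct $\Delta(h^1)=h^1\otimes1+1\otimes h^1$, $\Delta(v^i)=e^{h^1\otimes\alpha}(1\otimes v^i)+e^{-\beta\otimes h^1}(v^i\otimes1)$, where $e^{h^1\otimes\alpha}(1\otimes v^i)=\sum_{n\ge0}\frac{(h^1)^n}{n!}\otimes\alpha^n(v^i)$ and $e^{-\beta\otimes h^1}(v^i\otimes1)=\sum_{n\ge0}\frac{(-1)^n}{n!}\beta^n(v^i)\otimes(h^1)^n$. Since $\tilde G$ is simply connected, a Poisson–Lie structure with a given Lie bialgebra cocycle exists and is unique. *)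

theory Defs
  imports "HOL-Analysis.Analysis"
begin

fun matpow :: "real^'n^'n \<Rightarrow> nat \<Rightarrow> real^'n^'n" where
  "matpow A 0 = mat 1"
| "matpow A (Suc k) = A ** matpow A k"

definition mexp :: "real^'n^'n \<Rightarrow> real^'n^'n" where
  "mexp A = (\<Sum>k. (1 / fact k) *\<^sub>R matpow A k)"

definition oint :: "real \<Rightarrow> (real \<Rightarrow> real^'n^'n) \<Rightarrow> real^'n^'n" where
  "oint t f = (if 0 \<le> t then integral {0..t} f else - integral {t..0} f)"

text \<open>C i j k = structure constant C^{ij}_k, so [v^i,v^j] = sum_k C i j k v^k.\<close>
definition lie_structure_constants :: "('n::finite \<Rightarrow> 'n \<Rightarrow> 'n \<Rightarrow> real) \<Rightarrow> bool" where
  "lie_structure_constants C \<longleftrightarrow>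
     (\<forall>i j k. C i j k = - C j i k) \<and>
     (\<forall>i j l m. (\<Sum>k\<in>UNIV. C i j k * C k l m + C j l k * C k i m + C l i k * C k j m) = 0)"

text \<open>Omega0 antisymmetric and a 2-cocycle of V: w([x,y],z) + cyclic = 0.\<close>
definition lie_2cocycle :: "('n::finite \<Rightarrow> 'n \<Rightarrow> 'n \<Rightarrow> real) \<Rightarrow> real^'n^'n \<Rightarrow> bool" where
  "lie_2cocycle C W \<longleftrightarrow>
     (\<forall>i j. W $ i $ j = - W $ j $ i) \<and>
     (\<forall>i j l. (\<Sum>k\<in>UNIV. C i j k * W $ k $ l + C j l k * W $ k $ i + C l i k * W $ k $ j) = 0)"

text \<open>The linear map with alpha(v^i) = sum_j A$i$j v^j is a derivation of V.\<close>
definition is_derivation :: "('n::finite \<Rightarrow> 'n \<Rightarrow> 'n \<Rightarrow> real) \<Rightarrow> real^'n^'n \<Rightarrow> bool" where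
  "is_derivation C A \<longleftrightarrow>
     (\<forall>i j m. (\<Sum>k\<in>UNIV. C i j k * A $ k $ m) =
               (\<Sum>l\<in>UNIV. A $ i $ l * C l j m) + (\<Sum>l\<in>UNIV. A $ j $ l * C i l m))"

text \<open>A point t h_1 + xi is represented as (t, x) with x $ i = xi(v^i) = v^i(xi).
  In these coordinates alpha^* acts by A *v x.\<close>

definition gmul :: "real^'n^'n \<Rightarrow> real^'n^'n \<Rightarrow> real \<times> (real^'n) \<Rightarrow> real \<times> (real^'n) \<Rightarrow> real \<times> (real^'n)" where
  "gmul A B g g' = (fst g + fst g',
       mexp (fst g *\<^sub>R A) *v snd g' + mexp ((- fst g') *\<^sub>R B) *v snd g)"

definition gunit :: "real \<times> (real^'n)" where "gunit = (0, 0)"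

text \<open>Coordinate functions: None is h^1, Some i is v^i.\<close>
fun coord :: "'n option \<Rightarrow> real \<times> (real^'n) \<Rightarrow> real" where
  "coord None p = fst p"
| "coord (Some i) p = snd p $ i"

fun cdir :: "'n::finite option \<Rightarrow> real \<times> (real^'n)" where
  "cdir None = (1, 0)"
| "cdir (Some i) = (0, axis i 1)"

definition pd :: "'n::finite option \<Rightarrow> (real \<times> (real^'n) \<Rightarrow> real) \<Rightarrow> real \<times> (real^'n) \<Rightarrow> real" where
  "pd a f p = frechet_derivative f (at p) (cdir a)"

fun Ck :: "nat \<Rightarrow> ('a::euclidean_space \<Rightarrow> real) \<Rightarrow> bool" where
  "Ck 0 f = continuous_on UNIV f"
| "Ck (Suc k) f = ((\<forall>x. f differentiable (at x)) \<and> continuous_on UNIV f \<and>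
                   (\<forall>b\<in>Basis. Ck k (\<lambda>x. frechet_derivative f (at x) b)))"

definition smooth_fun :: "('a::euclidean_space \<Rightarrow> real) \<Rightarrow> bool" where
  "smooth_fun f \<longleftrightarrow> (\<forall>k. Ck k f)"

text \<open>A bivector field is given by its components P p a b = {x^a, x^b}(p) in the
  coordinates x^a (a :: 'n option); the bracket of functions is
  {f,g} = sum_{a,b} P a b (d_a f)(d_b g).\<close>

type_synonym 'n bivector = "real \<times> (real^'n) \<Rightarrow> 'n option \<Rightarrow> 'n option \<Rightarrow> real"

definition poisson_bivector :: "('n::finite) bivector \<Rightarrow> bool" where
  "poisson_bivector P \<longleftrightarrow>
     (\<forall>a b. smooth_fun (\<lambda>p. P p a b)) \<and>
     (\<forall>p a b. P p a b = - P p b a) \<and>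
     (\<forall>p a b c. (\<Sum>l\<in>UNIV.
          P p l a * pd l (\<lambda>q. P q b c) p + P p l b * pd l (\<lambda>q. P q c a) p
        + P p l c * pd l (\<lambda>q. P q a b) p) = 0)"

text \<open>Multiplicativity: P(g h) = (L_g)_* P(h) + (R_h)_* P(g).\<close>
definition multiplicative :: "real^'n^'n \<Rightarrow> real^'n^'n \<Rightarrow> ('n::finite) bivector \<Rightarrow> bool" where
  "multiplicative A B P \<longleftrightarrow>
     (\<forall>g h a b. P (gmul A B g h) a b =
        (\<Sum>c\<in>UNIV. \<Sum>d\<in>UNIV.
            pd c (\<lambda>k. coord a (gmul A B g k)) h * pd d (\<lambda>k. coord b (gmul A B g k)) h * P h c d)
      + (\<Sum>c\<in>UNIV. \<Sum>d\<in>UNIV.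
            pd c (\<lambda>k. coord a (gmul A B k h)) g * pd d (\<lambda>k. coord b (gmul A B k h)) g * P g c d))"

text \<open>Structure constants of the bracket (E) on <h^1> (+) V = dual of Lie(G~):
  [x^a, x^b] = sum_c ecoef a b c x^c.\<close>
fun ecoef :: "('n \<Rightarrow> 'n \<Rightarrow> 'n \<Rightarrow> real) \<Rightarrow> real^'n^'n \<Rightarrow> 'n option \<Rightarrow> 'n option \<Rightarrow> 'n option \<Rightarrow> real" where
  "ecoef C W (Some i) (Some j) None = W $ i $ j"
| "ecoef C W (Some i) (Some j) (Some k) = C i j k"
| "ecoef C W _ _ _ = 0"

text \<open>The linearization of P at the identity is the cocycle delta whose dual is (E):
  d_e {x^a, x^b} = [x^a, x^b].\<close>
definition has_cocycle :: "('n::finite \<Rightarrow> 'n \<Rightarrow> 'n \<Rightarrow> real) \<Rightarrow> real^'n^'n \<Rightarrow> 'n bivector \<Rightarrow> bool" where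
  "has_cocycle C W P \<longleftrightarrow> (\<forall>a b c. pd c (\<lambda>p. P p a b) gunit = ecoef C W a b c)"

definition poisson_lie_with_cocycle ::
  "real^'n^'n \<Rightarrow> real^'n^'n \<Rightarrow> ('n::finite \<Rightarrow> 'n \<Rightarrow> 'n \<Rightarrow> real) \<Rightarrow> real^'n^'n \<Rightarrow> 'n bivector \<Rightarrow> bool" where
  "poisson_lie_with_cocycle A B C W P \<longleftrightarrow>
     poisson_bivector P \<and> multiplicative A B P \<and> has_cocycle C W P"

definition Omega :: "real^'n^'n \<Rightarrow> real^'n^'n \<Rightarrow> real^'n^'n \<Rightarrow> real \<Rightarrow> real^'n^'n" where
  "Omega A B W t =
     mexp ((- t) *\<^sub>R B)
     ** oint t (\<lambda>s. mexp (s *\<^sub>R (A + B)) ** W ** transpose (mexp (s *\<^sub>R (A + B))))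
     ** transpose (mexp ((- t) *\<^sub>R B))"

fun claimed_bracket :: "real^'n^'n \<Rightarrow> real^'n^'n \<Rightarrow> ('n::finite \<Rightarrow> 'n \<Rightarrow> 'n \<Rightarrow> real) \<Rightarrow> real^'n^'n \<Rightarrow> 'n bivector" where
  "claimed_bracket A B C W p (Some i) (Some j) =
     Omega A B W (fst p) $ i $ j + (\<Sum>k\<in>UNIV. C i j k * snd p $ k)"
| "claimed_bracket A B C W p _ _ = 0"

end

theory Submission
  imports Defs
begin

(* Existence. Since A and B commute, exp(-tB) exp(t(A+B)) = exp(tA), so Omega(0) = 0 and Omega solves
   the linear ODE  Omega' = -B Omega - Omega B^T + exp(tA) Omega0 exp(tA)^T.  Every identity the
   bracket needs is proved by showing that the difference of the two sides solves a linear ODE with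
   zero initial value: the cocycle law
     Omega(t + s) = exp(tA) Omega(s) exp(tA)^T + exp(-sB) Omega(t) exp(-sB)^T,
   which is exactly multiplicativity; antisymmetry of Omega(t); and the 2-cocycle property of Omega(t)
   (the derivations act on the cyclic cocycle sum), which together with the Jacobi identity for C gives
   the Jacobi identity of the bracket.
   Uniqueness. The difference D of two Poisson-Lie bivectors with the same cocycle is multiplicative
   and vanishes to first order at the identity.  Along a one-parameter subgroup multiplicativity
   becomes a linear ODE for D, so D vanishes on the subgroups t |-> (t, 0) and s |-> (0, s y); every
   element (t, x) is the product (0, exp(tB) x) * (t, 0), so D = 0 everywhere. *)

section \<open>Derivatives of matrix-valued functions and linear ODEs\<close>

lemma bounded_bilinear_matrix_mult:
  "bounded_bilinear ((**) :: real^'n^'m \<Rightarrow> real^'p^'n \<Rightarrow> real^'p^'m)"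
  unfolding bilinear_conv_bounded_bilinear[symmetric] bilinear_def
  by (auto intro!: linearI simp: vec_eq_iff matrix_matrix_mult_def sum.distrib sum_distrib_left
      distrib_left distrib_right mult_ac)

lemma bounded_linear_transpose: "bounded_linear (transpose :: real^'n^'m \<Rightarrow> real^'m^'n)"
  unfolding linear_conv_bounded_linear[symmetric]
  by (rule linearI) (simp_all add: vec_eq_iff transpose_def)

lemma has_vector_derivative_matrix_mult [derivative_intros]:
  fixes f :: "real \<Rightarrow> real^'n^'m" and g :: "real \<Rightarrow> real^'p^'n"
  assumes "(f has_vector_derivative f') (at x within S)" "(g has_vector_derivative g') (at x within S)"
  shows "((\<lambda>x. f x ** g x) has_vector_derivative f x ** g' + f' ** g x) (at x within S)"
  by (rule bounded_bilinear.has_vector_derivative[OF bounded_bilinear_matrix_mult assms])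

lemma has_vector_derivative_transpose [derivative_intros]:
  fixes f :: "real \<Rightarrow> real^'n^'m"
  assumes "(f has_vector_derivative f') F"
  shows "((\<lambda>x. transpose (f x)) has_vector_derivative transpose f') F"
  by (rule bounded_linear.has_vector_derivative[OF bounded_linear_transpose assms])

lemma has_vector_derivative_translate:
  assumes "(f has_vector_derivative f') (at (a + s))"
  shows "((\<lambda>s. f (a + s)) has_vector_derivative f') (at s)"
proof -
  have "((+) a has_vector_derivative 1) (at s)"
    by (auto intro!: derivative_eq_intros)
  from vector_diff_chain_at[OF this assms] show ?thesis
    by (simp add: o_def)
qed

lemma has_vector_derivative_matrixI:
  fixes Y :: "real \<Rightarrow> real^'n^'m"
  assumes "\<And>i j. ((\<lambda>s. Y s $ i $ j) has_real_derivative Y' $ i $ j) (at t)"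
  shows "(Y has_vector_derivative Y') (at t)"
  unfolding has_vector_derivative_def
proof (subst has_derivative_componentwise_within, intro ballI)
  fix b :: "real^'n^'m" assume "b \<in> Basis"
  then obtain i j where b: "b = axis i (axis j 1)"
    unfolding Basis_vec_def by auto
  show "((\<lambda>x. Y x \<bullet> b) has_derivative (\<lambda>x. x *\<^sub>R Y' \<bullet> b)) (at t)"
    using assms[of i j]
    by (simp add: b inner_axis has_field_derivative_def mult.commute[of _ "Y' $ i $ j"])
qed

lemma matrix_add_rdistrib: "(A + B) ** C = A ** C + B ** (C::real^'n^'m)"
  by (simp add: vec_eq_iff matrix_matrix_mult_def sum.distrib distrib_right)
lemma matrix_diff_ldistrib: "A ** (B - C) = A ** B - A ** (C::real^'n^'m)"
  by (simp add: vec_eq_iff matrix_matrix_mult_def sum_subtractf right_diff_distrib)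
lemma matrix_diff_rdistrib: "(A - B) ** C = A ** C - B ** (C::real^'n^'m)"
  by (simp add: vec_eq_iff matrix_matrix_mult_def sum_subtractf left_diff_distrib)
lemma matrix_neg_left: "(- A) ** C = - (A ** (C::real^'n^'m))"
  by (simp add: vec_eq_iff matrix_matrix_mult_def sum_negf)
lemma matrix_neg_right: "A ** (- C) = - (A ** (C::real^'n^'m))"
  by (simp add: vec_eq_iff matrix_matrix_mult_def sum_negf)
lemma transpose_add: "transpose (A + B) = transpose A + transpose (B::real^'n^'m)"
  by (simp add: vec_eq_iff transpose_def)
lemma transpose_diff: "transpose (A - B) = transpose A - transpose (B::real^'n^'m)"
  by (simp add: vec_eq_iff transpose_def)
lemma transpose_neg: "transpose (- A) = - transpose (A::real^'n^'m)"
  by (simp add: vec_eq_iff transpose_def)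
lemma transpose_zero [simp]: "transpose (0::real^'n^'m) = 0"
  by (simp add: vec_eq_iff transpose_def)

lemmas matrix_ring_simps = matrix_add_ldistrib matrix_add_rdistrib matrix_diff_ldistrib
  matrix_diff_rdistrib matrix_neg_left matrix_neg_right transpose_add transpose_diff transpose_neg
  transpose_zero matrix_transpose_mul matrix_mul_assoc

(* Gronwall: E = |f|^2 satisfies |E'| <= K E, so exp(-K s) E(s) is nonincreasing. *)
lemma linear_ode_zero_nonneg:
  fixes f :: "real \<Rightarrow> 'a::real_inner"
  assumes L: "bounded_linear L" and f': "\<And>t. (f has_vector_derivative L (f t)) (at t)"
    and f0: "f 0 = 0" and "0 \<le> t"
  shows "f t = 0"
proof -
  define K where "K = 2 * onorm L"
  define E where "E s = f s \<bullet> f s" for s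
  define E' where "E' s = 2 * (f s \<bullet> L (f s))" for s
  have E': "(E has_real_derivative E' s) (at s)" for s
    unfolding E_def E'_def has_real_derivative_iff_has_vector_derivative
    using bounded_bilinear.has_vector_derivative[OF bounded_bilinear_inner f'[of s] f'[of s]]
    by (simp add: inner_commute)
  have "\<bar>E' s\<bar> \<le> 2 * (norm (f s) * (onorm L * norm (f s)))" for s
  proof -
    have "\<bar>f s \<bullet> L (f s)\<bar> \<le> norm (f s) * norm (L (f s))"
      by (rule Cauchy_Schwarz_ineq2)
    also have "\<dots> \<le> norm (f s) * (onorm L * norm (f s))"
      by (intro mult_left_mono onorm[OF L]) simp
    finally show ?thesis by (simp add: E'_def abs_mult)
  qed
  then have E'_le: "\<bar>E' s\<bar> \<le> K * E s" for s
    by (simp add: K_def E_def power2_norm_eq_inner[symmetric] power2_eq_square mult_ac)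
  define H where "H s = exp (- K * s) * E s" for s
  have "H t \<le> H 0"
  proof (rule DERIV_nonpos_imp_nonincreasing[OF \<open>0 \<le> t\<close>])
    fix s
    have "(H has_real_derivative exp (- K * s) * (E' s - K * E s)) (at s)"
      unfolding H_def by (auto intro!: derivative_eq_intros E' simp: algebra_simps)
    moreover have "exp (- K * s) * (E' s - K * E s) \<le> 0"
      using E'_le[of s] by (intro mult_nonneg_nonpos) auto
    ultimately show "\<exists>y. DERIV H s :> y \<and> y \<le> 0" by blast
  qed
  then have "E t \<le> 0"
    using f0 by (simp add: H_def E_def mult_le_0_iff)
  then show ?thesis
    by (metis E_def inner_gt_zero_iff not_le)
qed

lemma linear_ode_zero:
  fixes f :: "real \<Rightarrow> 'a::real_inner"
  assumes L: "bounded_linear L" and f': "\<And>t. (f has_vector_derivative L (f t)) (at t)"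
    and f0: "f 0 = 0"
  shows "f t = 0"
proof (cases "0 \<le> t")
  case True
  then show ?thesis by (rule linear_ode_zero_nonneg[OF L f' f0])
next
  case False
  have "bounded_linear (\<lambda>x. - L x)"
    using L by (rule bounded_linear_minus)
  moreover have "((\<lambda>s. f (- s)) has_vector_derivative - L (f (- s))) (at s)" for s
  proof -
    have "(uminus has_vector_derivative -1) (at s)"
      by (auto intro!: derivative_eq_intros)
    from vector_diff_chain_at[OF this f'[of "- s"]] show ?thesis
      by (simp add: o_def)
  qed
  ultimately have "f (- (- t)) = 0"
    by (rule linear_ode_zero_nonneg[where f="\<lambda>s. f (- s)"]) (use f0 False in auto)
  then show ?thesis by simp
qed

lemma matrix_ode_zero:
  fixes Y :: "real \<Rightarrow> real^'n^'m"
  assumes Y': "\<And>s. (Y has_vector_derivative P ** Y s + Y s ** Q) (at s)" and Y0: "Y 0 = 0"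
  shows "Y t = 0"
proof (rule linear_ode_zero[OF _ Y' Y0])
  show "bounded_linear (\<lambda>X. P ** X + X ** Q)"
    by (intro bounded_linear_add bounded_bilinear.bounded_linear_right bounded_bilinear.bounded_linear_left
        bounded_bilinear_matrix_mult)
qed

section \<open>The matrix exponential\<close>

lemma matpow_scaleR: "matpow (c *\<^sub>R A) k = c ^ k *\<^sub>R matpow A k"
  by (induction k) (simp_all add: matrix_scalar_ac scalar_matrix_assoc[symmetric])

lemma matpow_entry_bound:
  "\<bar>matpow A k $ i $ j\<bar> \<le> (\<Sum>a\<in>UNIV. \<Sum>b\<in>UNIV. \<bar>A $ a $ b\<bar>) ^ k"
proof (induction k arbitrary: i j)
  case 0
  then show ?case by (simp add: mat_def)
next
  case (Suc k)
  let ?m = "\<Sum>a\<in>UNIV. \<Sum>b\<in>UNIV. \<bar>A $ a $ b\<bar>"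
  have "\<bar>matpow A (Suc k) $ i $ j\<bar> = \<bar>\<Sum>l\<in>UNIV. A $ i $ l * matpow A k $ l $ j\<bar>"
    by (simp add: matrix_matrix_mult_def)
  also have "\<dots> \<le> (\<Sum>l\<in>UNIV. \<bar>A $ i $ l\<bar> * ?m ^ k)"
    by (rule order_trans[OF sum_abs], rule sum_mono) (auto simp: abs_mult intro!: mult_left_mono Suc.IH)
  also have "\<dots> = (\<Sum>l\<in>UNIV. \<bar>A $ i $ l\<bar>) * ?m ^ k"
    by (simp add: sum_distrib_right)
  also have "\<dots> \<le> ?m * ?m ^ k"
    by (intro mult_right_mono) (auto intro!: member_le_sum sum_nonneg zero_le_power)
  finally show ?case by simp
qed

lemma summable_mexp_entry_series: "summable (\<lambda>k. matpow A k $ i $ j / fact k * s ^ k)"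
proof (rule summable_comparison_test)
  let ?m = "\<Sum>a\<in>UNIV. \<Sum>b\<in>UNIV. \<bar>A $ a $ b\<bar>"
  show "summable (\<lambda>k. inverse (fact k) * (?m * \<bar>s\<bar>) ^ k)"
    by (rule summable_exp)
  have "norm (matpow A k $ i $ j / fact k * s ^ k) = \<bar>matpow A k $ i $ j\<bar> * \<bar>s\<bar> ^ k / fact k" for k
    by (simp add: abs_mult power_abs)
  also have "\<dots> k \<le> ?m ^ k * \<bar>s\<bar> ^ k / fact k" for k
    by (intro divide_right_mono mult_right_mono matpow_entry_bound) auto
  finally have "norm (matpow A k $ i $ j / fact k * s ^ k) \<le> ?m ^ k * \<bar>s\<bar> ^ k / fact k" for k .
  then show "\<exists>N. \<forall>k\<ge>N. norm (matpow A k $ i $ j / fact k * s ^ k) \<le> inverse (fact k) * (?m * \<bar>s\<bar>) ^ k"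
    by (simp add: power_mult_distrib field_simps)
qed

lemma mexp_entry_sums: "(\<lambda>k. matpow A k $ i $ j / fact k * s ^ k) sums (mexp (s *\<^sub>R A) $ i $ j)"
proof -
  define c where "c i j = (\<Sum>k. matpow A k $ i $ j / fact k * s ^ k)" for i j
  have "(\<lambda>k. ((1 / fact k) *\<^sub>R matpow (s *\<^sub>R A) k) $ i $ j) sums c i j" for i j
    using summable_sums[OF summable_mexp_entry_series[of A i j s]]
    by (simp add: c_def matpow_scaleR mult_ac)
  then have "(\<lambda>k. (1 / fact k) *\<^sub>R matpow (s *\<^sub>R A) k) sums (\<chi> i j. c i j)"
    unfolding sums_def by (auto intro!: vec_tendstoI)
  then have "mexp (s *\<^sub>R A) = (\<chi> i j. c i j)"
    unfolding mexp_def by (rule sums_unique[symmetric])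
  then show ?thesis
    using summable_sums[OF summable_mexp_entry_series] by (simp add: c_def)
qed

lemma has_real_derivative_mexp_entry:
  "((\<lambda>s. mexp (s *\<^sub>R A) $ i $ j) has_real_derivative (A ** mexp (t *\<^sub>R A)) $ i $ j) (at t)"
proof -
  define c where "c k = matpow A k $ i $ j / fact k" for k
  have "(\<lambda>s. mexp (s *\<^sub>R A) $ i $ j) = (\<lambda>s. \<Sum>k. c k * s ^ k)"
    using mexp_entry_sums[of A i j] by (auto simp: c_def sums_iff)
  moreover have "((\<lambda>s. \<Sum>k. c k * s ^ k) has_real_derivative (\<Sum>k. diffs c k * t ^ k)) (at t)"
    unfolding c_def by (intro termdiffs_strong_converges_everywhere summable_mexp_entry_series)
  moreover have "(\<lambda>k. diffs c k * t ^ k) sums (A ** mexp (t *\<^sub>R A)) $ i $ j"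
  proof -
    have "diffs c k * t ^ k = (\<Sum>l\<in>UNIV. A $ i $ l * matpow A k $ l $ j) / fact k * t ^ k" for k
      by (simp add: diffs_def c_def matrix_matrix_mult_def field_simps del: of_nat_Suc)
    also have "\<dots> k = (\<Sum>l\<in>UNIV. A $ i $ l * (matpow A k $ l $ j / fact k * t ^ k))" for k
      by (simp add: sum_divide_distrib sum_distrib_left mult_ac)
    finally have "diffs c k * t ^ k = (\<Sum>l\<in>UNIV. A $ i $ l * (matpow A k $ l $ j / fact k * t ^ k))" for k .
    moreover have "(\<lambda>k. \<Sum>l\<in>UNIV. A $ i $ l * (matpow A k $ l $ j / fact k * t ^ k)) sums
        (\<Sum>l\<in>UNIV. A $ i $ l * mexp (t *\<^sub>R A) $ l $ j)"
      by (intro sums_sum sums_mult mexp_entry_sums)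
    ultimately show ?thesis
      by (simp add: matrix_matrix_mult_def)
  qed
  ultimately show ?thesis
    by (simp add: sums_iff)
qed

lemma has_vector_derivative_mexp:
  "((\<lambda>s. mexp (s *\<^sub>R A)) has_vector_derivative A ** mexp (t *\<^sub>R A)) (at t)"
  by (rule has_vector_derivative_matrixI has_real_derivative_mexp_entry)+

lemma has_vector_derivative_mexp_neg:
  "((\<lambda>s. mexp ((- s) *\<^sub>R A)) has_vector_derivative - (A ** mexp ((- t) *\<^sub>R A))) (at t)"
  using has_vector_derivative_mexp[of "- A" t] by (simp add: matrix_neg_left)

lemma mexp_zero [simp]: "mexp (0::real^'n^'n) = mat 1"
proof -
  have "mexp (0::real^'n^'n) $ i $ j = mat 1 $ i $ j" for i j
    using mexp_entry_sums[of "0::real^'n^'n" i j 0]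
      powser_sums_zero[of "\<lambda>k. matpow (0::real^'n^'n) k $ i $ j / fact k"]
    by (simp add: sums_iff mat_def)
  then show ?thesis by (simp add: vec_eq_iff)
qed

lemma mexp_commute:
  assumes "P ** Q = Q ** P"
  shows "mexp (s *\<^sub>R P) ** Q = Q ** mexp (s *\<^sub>R P)"
proof -
  let ?Y = "\<lambda>s. mexp (s *\<^sub>R P) ** Q - Q ** mexp (s *\<^sub>R P)"
  have "?Y s = 0"
  proof (rule matrix_ode_zero[where Y = ?Y])
    show "(?Y has_vector_derivative P ** ?Y s + ?Y s ** 0) (at s)" for s
      by (rule has_vector_derivative_eq_rhs, (rule derivative_intros has_vector_derivative_mexp)+)
        (simp add: assms matrix_ring_simps)
  qed simp
  then show ?thesis by simp
qed

lemma mexp_neg_mult: "mexp ((- s) *\<^sub>R P) ** mexp (s *\<^sub>R P) = mat 1"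
proof -
  let ?Y = "\<lambda>s. mexp ((- s) *\<^sub>R P) ** mexp (s *\<^sub>R P) - mat 1"
  have "?Y s = 0"
  proof (rule matrix_ode_zero[where Y = ?Y])
    show "(?Y has_vector_derivative 0 ** ?Y s + ?Y s ** 0) (at s)" for s
      using mexp_commute[of P P "- s"]
      by - (rule has_vector_derivative_eq_rhs,
          (rule derivative_intros has_vector_derivative_mexp has_vector_derivative_mexp_neg)+,
          simp add: matrix_ring_simps)
  qed simp
  then show ?thesis by simp
qed

lemma mexp_add: "mexp ((a + s) *\<^sub>R P) = mexp (a *\<^sub>R P) ** mexp (s *\<^sub>R P)"
proof -
  let ?Y = "\<lambda>s. mexp ((a + s) *\<^sub>R P) - mexp (a *\<^sub>R P) ** mexp (s *\<^sub>R P)"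
  have shift: "((\<lambda>s. mexp ((a + s) *\<^sub>R P)) has_vector_derivative P ** mexp ((a + s) *\<^sub>R P)) (at s)" for s
    by (rule has_vector_derivative_translate[OF has_vector_derivative_mexp])
  have "?Y s = 0"
  proof (rule matrix_ode_zero[where Y = ?Y])
    show "(?Y has_vector_derivative P ** ?Y s + ?Y s ** 0) (at s)" for s
      using mexp_commute[of P P a]
      by - (rule has_vector_derivative_eq_rhs, (rule derivative_intros shift has_vector_derivative_mexp)+,
          simp add: matrix_ring_simps)
  qed simp
  then show ?thesis by simp
qed

lemma mexp_neg_mult_mexp_add:
  assumes "P ** Q = Q ** P"
  shows "mexp ((- s) *\<^sub>R Q) ** mexp (s *\<^sub>R (P + Q)) = mexp (s *\<^sub>R P)"
proof -
  let ?Y = "\<lambda>s. mexp ((- s) *\<^sub>R Q) ** mexp (s *\<^sub>R (P + Q)) - mexp (s *\<^sub>R P)"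
  have "?Y s = 0"
  proof (rule matrix_ode_zero[where Y = ?Y])
    show "(?Y has_vector_derivative P ** ?Y s + ?Y s ** 0) (at s)" for s
      using mexp_commute[of Q P "- s"] mexp_commute[of Q Q "- s"] assms
      by - (rule has_vector_derivative_eq_rhs,
          (rule derivative_intros has_vector_derivative_mexp has_vector_derivative_mexp_neg)+,
          simp add: matrix_ring_simps)
  qed simp
  then show ?thesis by simp
qed

section \<open>The matrix function Omega\<close>

definition congruence :: "real^'n^'m \<Rightarrow> real^'n^'n \<Rightarrow> real^'m^'m" where
  "congruence E X = E ** X ** transpose E"

lemma has_vector_derivative_oint:
  fixes G :: "real \<Rightarrow> real^'n^'n"
  assumes G: "continuous_on UNIV G"
  shows "((\<lambda>t. oint t G) has_vector_derivative G t) (at t)"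
proof -
  define c where "c = min 0 t - 1"
  have int: "G integrable_on {x..y}" for x y
    by (rule integrable_continuous_real) (rule continuous_on_subset[OF G], simp)
  have oint_eq: "oint u G = integral {c..u} G - integral {c..0} G" if "c \<le> u" for u
  proof (cases "0 \<le> u")
    case True
    have "integral {c..0} G + integral {0..u} G = integral {c..u} G"
      by (rule Henstock_Kurzweil_Integration.integral_combine) (use True c_def that int in auto)
    then show ?thesis using True by (simp add: oint_def algebra_simps)
  next
    case False
    have "integral {c..u} G + integral {u..0} G = integral {c..0} G"
      by (rule Henstock_Kurzweil_Integration.integral_combine) (use False c_def that int in auto)
    then show ?thesis using False by (simp add: oint_def algebra_simps)
  qed
  have "((\<lambda>u. integral {c..u} G) has_vector_derivative G t) (at t within {c..t + 1})"
    by (rule integral_has_vector_derivative) (auto intro: continuous_on_subset[OF G] simp: c_def)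
  then have "((\<lambda>u. integral {c..u} G) has_vector_derivative G t) (at t within {c<..<t + 1})"
    by (rule has_vector_derivative_within_subset) auto
  then have "((\<lambda>u. integral {c..u} G) has_vector_derivative G t) (at t)"
    by (subst (asm) has_vector_derivative_within_open) (auto simp: c_def)
  then have "((\<lambda>u. integral {c..u} G - integral {c..0} G) has_vector_derivative G t) (at t)"
    using has_vector_derivative_diff[OF _ has_vector_derivative_const] by fastforce
  then show ?thesis
    by (rule has_vector_derivative_transform_within_open[where S="{c<..}"]) (auto simp: c_def oint_eq)
qed

lemma has_vector_derivative_congruence_mexp:
  "((\<lambda>t. congruence (mexp (t *\<^sub>R A)) W) has_vector_derivative
      A ** congruence (mexp (t *\<^sub>R A)) W + congruence (mexp (t *\<^sub>R A)) W ** transpose A) (at t)"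
  unfolding congruence_def
  by (rule has_vector_derivative_eq_rhs, (rule derivative_intros has_vector_derivative_mexp)+)
    (simp add: matrix_ring_simps)

lemma has_vector_derivative_Omega:
  assumes AB: "A ** B = B ** A"
  shows "(Omega A B W has_vector_derivative
      - (B ** Omega A B W t) - Omega A B W t ** transpose B + congruence (mexp (t *\<^sub>R A)) W) (at t)"
proof -
  let ?G = "\<lambda>s. mexp (s *\<^sub>R (A + B)) ** W ** transpose (mexp (s *\<^sub>R (A + B)))"
  have "(?G has_vector_derivative
      mexp (s *\<^sub>R (A + B)) ** W ** transpose ((A + B) ** mexp (s *\<^sub>R (A + B)))
      + (A + B) ** mexp (s *\<^sub>R (A + B)) ** W ** transpose (mexp (s *\<^sub>R (A + B)))) (at s)" for s
    by (rule has_vector_derivative_eq_rhs, (rule derivative_intros has_vector_derivative_mexp)+) simp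
  then have "continuous_on UNIV ?G"
    by (intro continuous_at_imp_continuous_on ballI has_vector_derivative_continuous) blast
  then have oint: "((\<lambda>t. oint t ?G) has_vector_derivative ?G t) (at t)"
    by (rule has_vector_derivative_oint)
  show ?thesis
    unfolding Omega_def congruence_def mexp_neg_mult_mexp_add[OF AB, of t, symmetric]
    \<comment> \<open>the integrand at the upper limit, conjugated by exp(-tB), becomes exp(tA) W exp(tA)^T\<close>
    by (rule has_vector_derivative_eq_rhs, (rule derivative_intros has_vector_derivative_mexp_neg oint)+)
      (simp add: matrix_ring_simps)
qed

lemma Omega_zero [simp]: "Omega A B W 0 = 0"
  by (simp add: Omega_def oint_def)

lemma Omega_add:
  assumes AB: "A ** B = B ** A"
  shows "Omega A B W (t + s) =
    congruence (mexp (t *\<^sub>R A)) (Omega A B W s) + congruence (mexp ((- s) *\<^sub>R B)) (Omega A B W t)"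
proof -
  let ?E = "mexp (t *\<^sub>R A)"
  let ?Y = "\<lambda>s. Omega A B W (t + s) -
    (congruence ?E (Omega A B W s) + congruence (mexp ((- s) *\<^sub>R B)) (Omega A B W t))"
  have EB: "?E ** B = B ** ?E"
    by (rule mexp_commute[OF AB])
  then have "X ** ?E ** B = X ** B ** ?E" "transpose B ** transpose ?E = transpose ?E ** transpose B"
    "X ** transpose B ** transpose ?E = X ** transpose ?E ** transpose B" for X
    by (simp_all flip: matrix_mul_assoc matrix_transpose_mul)
  note commute = EB this
  have F: "congruence (mexp ((t + s) *\<^sub>R A)) W = congruence ?E (congruence (mexp (s *\<^sub>R A)) W)" for s
    by (simp add: congruence_def mexp_add matrix_ring_simps)
  have "?Y s = 0"
  proof (rule matrix_ode_zero[where Y = ?Y])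
    show "(?Y has_vector_derivative (- B) ** ?Y s + ?Y s ** transpose (- B)) (at s)" for s
      unfolding congruence_def
      by (rule has_vector_derivative_eq_rhs, (rule derivative_intros has_vector_derivative_mexp_neg
          has_vector_derivative_translate[OF has_vector_derivative_Omega[OF AB]]
          has_vector_derivative_Omega[OF AB])+)
        (simp only: F, simp add: congruence_def matrix_ring_simps commute algebra_simps)
  qed (simp add: congruence_def)
  then show ?thesis by simp
qed

lemma Omega_antisym:
  assumes AB: "A ** B = B ** A" and W: "transpose W = - W"
  shows "transpose (Omega A B W t) = - Omega A B W t"
proof -
  let ?Y = "\<lambda>t. Omega A B W t + transpose (Omega A B W t)"
  have "?Y t = 0"
  proof (rule matrix_ode_zero[where Y = ?Y])
    show "(?Y has_vector_derivative (- B) ** ?Y s + ?Y s ** transpose (- B)) (at s)" for s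
      by (rule has_vector_derivative_eq_rhs,
          (rule derivative_intros has_vector_derivative_Omega[OF AB])+)
        (simp add: congruence_def matrix_ring_simps W algebra_simps)
  qed simp
  then show ?thesis
    by (simp add: eq_neg_iff_add_eq_0 add.commute)
qed

section \<open>The linear Poisson structure and 2-cocycles\<close>

definition lie_poisson_matrix :: "('n::finite \<Rightarrow> 'n \<Rightarrow> 'n \<Rightarrow> real) \<Rightarrow> real^'n \<Rightarrow> real^'n^'n" where
  "lie_poisson_matrix C x = (\<chi> i j. \<Sum>k\<in>UNIV. C i j k * x $ k)"

lemma linear_lie_poisson_matrix: "linear (lie_poisson_matrix C)"
  by (rule linearI)
    (simp_all add: lie_poisson_matrix_def vec_eq_iff distrib_left sum.distrib sum_distrib_left mult_ac)

lemma lie_poisson_matrix_derivation: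
  assumes D: "is_derivation C D"
  shows "lie_poisson_matrix C (D *v y) = D ** lie_poisson_matrix C y + lie_poisson_matrix C y ** transpose D"
proof -
  have "(\<Sum>k\<in>UNIV. C i j k * (D *v y) $ k) = (\<Sum>k\<in>UNIV. \<Sum>m\<in>UNIV. C i j k * D $ k $ m * y $ m)" for i j
    by (simp add: matrix_vector_mult_def sum_distrib_left mult.assoc)
  also have "\<dots> i j = (\<Sum>m\<in>UNIV. (\<Sum>k\<in>UNIV. C i j k * D $ k $ m) * y $ m)" for i j
    by (subst sum.swap) (simp add: sum_distrib_right)
  also have "\<dots> i j = (\<Sum>m\<in>UNIV.
      (\<Sum>l\<in>UNIV. D $ i $ l * C l j m) * y $ m + (\<Sum>l\<in>UNIV. D $ j $ l * C i l m) * y $ m)" for i j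
    using D by (simp add: is_derivation_def distrib_right)
  also have "\<dots> i j = (\<Sum>m\<in>UNIV. \<Sum>l\<in>UNIV. D $ i $ l * C l j m * y $ m)
      + (\<Sum>m\<in>UNIV. \<Sum>l\<in>UNIV. D $ j $ l * C i l m * y $ m)" for i j
    by (simp add: sum.distrib sum_distrib_right)
  also have "\<dots> i j = (\<Sum>l\<in>UNIV. \<Sum>m\<in>UNIV. D $ i $ l * C l j m * y $ m)
      + (\<Sum>l\<in>UNIV. \<Sum>m\<in>UNIV. D $ j $ l * C i l m * y $ m)" for i j
    by (intro arg_cong2[where f = "(+)"] sum.swap)
  also have "\<dots> i j = (\<Sum>l\<in>UNIV. D $ i $ l * (\<Sum>m\<in>UNIV. C l j m * y $ m))
      + (\<Sum>l\<in>UNIV. (\<Sum>m\<in>UNIV. C i l m * y $ m) * D $ j $ l)" for i j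
    by (simp add: sum_distrib_left sum_distrib_right mult_ac)
  finally show ?thesis
    by (simp add: lie_poisson_matrix_def vec_eq_iff matrix_matrix_mult_def transpose_def)
qed

lemma bounded_linear_matrix_vector_mult_left:
  "bounded_linear (\<lambda>Y::real^'n^'m. Y *v x)"
  unfolding linear_conv_bounded_linear[symmetric]
  by (rule linearI)
    (simp_all add: matrix_vector_mult_def vec_eq_iff sum.distrib sum_distrib_left distrib_left mult_ac)

lemma lie_poisson_matrix_mexp:
  assumes D: "is_derivation C D"
  shows "lie_poisson_matrix C (mexp (s *\<^sub>R D) *v x) = congruence (mexp (s *\<^sub>R D)) (lie_poisson_matrix C x)"
proof -
  let ?M = "lie_poisson_matrix C"
  let ?Y = "\<lambda>s. ?M (mexp (s *\<^sub>R D) *v x) - congruence (mexp (s *\<^sub>R D)) (?M x)"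
  have M: "bounded_linear (\<lambda>Y. ?M (Y *v x))"
    using linear_lie_poisson_matrix[of C]
    by (intro bounded_linear_compose[OF _ bounded_linear_matrix_vector_mult_left])
      (simp add: linear_conv_bounded_linear)
  have "?Y s = 0"
  proof (rule matrix_ode_zero[where Y = ?Y])
    show "(?Y has_vector_derivative D ** ?Y s + ?Y s ** transpose D) (at s)" for s
      unfolding congruence_def
      by (rule has_vector_derivative_eq_rhs, (rule derivative_intros has_vector_derivative_mexp
          bounded_linear.has_vector_derivative[OF M])+)
        (simp add: lie_poisson_matrix_derivation[OF D] congruence_def matrix_ring_simps algebra_simps
          flip: matrix_vector_mul_assoc)
  qed (simp add: congruence_def)
  then show ?thesis by simp
qed

(* bracket_form C X i j l is X([v^i, v^j], v^l) for the bilinear form X. *)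
definition bracket_form :: "('n::finite \<Rightarrow> 'n \<Rightarrow> 'n \<Rightarrow> real) \<Rightarrow> real^'n^'n \<Rightarrow> 'n \<Rightarrow> 'n \<Rightarrow> 'n \<Rightarrow> real" where
  "bracket_form C X i j l = (\<Sum>k\<in>UNIV. C i j k * X $ k $ l)"

definition cocycle_defect :: "('n::finite \<Rightarrow> 'n \<Rightarrow> 'n \<Rightarrow> real) \<Rightarrow> real^'n^'n \<Rightarrow> real^'n^'n^'n" where
  "cocycle_defect C X =
     (\<chi> i j l. bracket_form C X i j l + bracket_form C X j l i + bracket_form C X l i j)"

definition trilinear_action :: "real^'n^'n \<Rightarrow> real^'n^'n^'n \<Rightarrow> real^'n^'n^'n" where
  "trilinear_action D T =
     (\<chi> i j l. \<Sum>q\<in>UNIV. D $ i $ q * T $ q $ j $ l + D $ j $ q * T $ i $ q $ l + D $ l $ q * T $ i $ j $ q)"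

lemma lie_2cocycle_iff: "lie_2cocycle C W \<longleftrightarrow> transpose W = - W \<and> cocycle_defect C W = 0"
  by (auto simp: lie_2cocycle_def cocycle_defect_def bracket_form_def vec_eq_iff transpose_def sum.distrib)

lemma bounded_linear_cocycle_defect: "bounded_linear (cocycle_defect C)"
  unfolding linear_conv_bounded_linear[symmetric]
  by (rule linearI)
    (simp_all add: cocycle_defect_def bracket_form_def vec_eq_iff distrib_left sum.distrib
      sum_distrib_left mult_ac)

lemma bounded_linear_trilinear_action: "bounded_linear (trilinear_action D)"
  unfolding linear_conv_bounded_linear[symmetric]
  by (rule linearI)
    (simp_all add: trilinear_action_def vec_eq_iff distrib_left sum.distrib sum_distrib_left mult_ac)

lemma bracket_form_derivation_left:
  assumes D: "is_derivation C D"
  shows "bracket_form C (D ** X) i j l =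
    (\<Sum>q\<in>UNIV. D $ i $ q * bracket_form C X q j l) + (\<Sum>q\<in>UNIV. D $ j $ q * bracket_form C X i q l)"
proof -
  have column: "bracket_form C Y a b c = lie_poisson_matrix C (column c Y) $ a $ b" for Y a b c
    by (simp add: bracket_form_def lie_poisson_matrix_def column_def)
  have col: "column l (D ** X) = D *v column l X"
    by (simp add: column_def vec_eq_iff matrix_matrix_mult_def matrix_vector_mult_def)
  show ?thesis
    unfolding column col lie_poisson_matrix_derivation[OF D]
    by (simp add: matrix_matrix_mult_def transpose_def mult.commute)
qed

lemma bracket_form_transpose_right:
  "bracket_form C (X ** transpose D) i j l = (\<Sum>q\<in>UNIV. D $ l $ q * bracket_form C X i j q)"
proof -
  have "bracket_form C (X ** transpose D) i j l = (\<Sum>k\<in>UNIV. \<Sum>q\<in>UNIV. C i j k * X $ k $ q * D $ l $ q)"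
    by (simp add: bracket_form_def matrix_matrix_mult_def transpose_def sum_distrib_left mult.assoc)
  also have "\<dots> = (\<Sum>q\<in>UNIV. \<Sum>k\<in>UNIV. C i j k * X $ k $ q * D $ l $ q)"
    by (rule sum.swap)
  also have "\<dots> = (\<Sum>q\<in>UNIV. D $ l $ q * bracket_form C X i j q)"
    by (simp add: bracket_form_def sum_distrib_left mult_ac)
  finally show ?thesis .
qed

lemma cocycle_defect_derivation:
  assumes D: "is_derivation C D"
  shows "cocycle_defect C (D ** X + X ** transpose D) = trilinear_action D (cocycle_defect C X)"
proof -
  have add: "bracket_form C (Y + Z) i j l = bracket_form C Y i j l + bracket_form C Z i j l" for Y Z i j l
    by (simp add: bracket_form_def distrib_left sum.distrib)
  show ?thesis
    unfolding cocycle_defect_def trilinear_action_def vec_eq_iff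
    by (simp add: add bracket_form_derivation_left[OF D] bracket_form_transpose_right
        sum.distrib distrib_left algebra_simps)
qed

lemma derivation_uminus: "is_derivation C D \<Longrightarrow> is_derivation C (- D)"
  by (simp add: is_derivation_def sum_negf)

lemma cocycle_defect_congruence_mexp:
  assumes A: "is_derivation C A" and W: "cocycle_defect C W = 0"
  shows "cocycle_defect C (congruence (mexp (t *\<^sub>R A)) W) = 0"
proof (rule linear_ode_zero[OF bounded_linear_trilinear_action[of A]])
  fix t
  from bounded_linear.has_vector_derivative[OF bounded_linear_cocycle_defect[of C]
      has_vector_derivative_congruence_mexp[of A W t]]
  show "((\<lambda>t. cocycle_defect C (congruence (mexp (t *\<^sub>R A)) W)) has_vector_derivative
      trilinear_action A (cocycle_defect C (congruence (mexp (t *\<^sub>R A)) W))) (at t)"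
    by (simp only: cocycle_defect_derivation[OF A])
qed (simp add: congruence_def W)

lemma cocycle_defect_Omega:
  assumes AB: "A ** B = B ** A" and A: "is_derivation C A" and B: "is_derivation C B"
    and W: "cocycle_defect C W = 0"
  shows "cocycle_defect C (Omega A B W t) = 0"
proof (rule linear_ode_zero[OF bounded_linear_trilinear_action[of "- B"]])
  fix t
  have "(Omega A B W has_vector_derivative
      ((- B) ** Omega A B W t + Omega A B W t ** transpose (- B)) + congruence (mexp (t *\<^sub>R A)) W) (at t)"
    by (rule has_vector_derivative_eq_rhs[OF has_vector_derivative_Omega[OF AB]])
      (simp add: matrix_ring_simps)
  from bounded_linear.has_vector_derivative[OF bounded_linear_cocycle_defect[of C] this]
  show "((\<lambda>t. cocycle_defect C (Omega A B W t)) has_vector_derivative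
      trilinear_action (- B) (cocycle_defect C (Omega A B W t))) (at t)"
    by (simp only: linear_add[OF bounded_linear_cocycle_defect[of C, THEN bounded_linear.linear],
          of "(- B) ** Omega A B W t + Omega A B W t ** transpose (- B)"]
        cocycle_defect_derivation[OF derivation_uminus[OF B]] cocycle_defect_congruence_mexp[OF A W]
        add_0_right)
qed (simp add: cocycle_defect_def bracket_form_def vec_eq_iff)

section \<open>Translations in the group\<close>

lemma sum_UNIV_option:
  fixes f :: "'a::finite option \<Rightarrow> 'b::comm_monoid_add"
  shows "(\<Sum>c\<in>UNIV. f c) = f None + (\<Sum>i\<in>UNIV. f (Some i))"
proof -
  have "(\<Sum>c\<in>insert None (range Some). f c) = f None + sum f (range Some)"
    by (rule sum.insert) auto
  then show ?thesis
    by (simp add: UNIV_option_conv[symmetric] sum.reindex)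
qed

lemma coord_cdir: "coord c (cdir c') = (if c = c' then 1 else 0)"
  by (cases c; cases c') (auto simp: axis_def)

lemma pd_eq_of_has_derivative:
  assumes "(f has_derivative (\<lambda>v. \<Sum>c\<in>UNIV. J c * coord c v)) (at p)"
  shows "pd c f p = J c"
  unfolding pd_def frechet_derivative_at[OF assms, symmetric] coord_cdir
  by (simp add: if_distrib cong: if_cong)

lemma has_derivative_mexp_entry_fst:
  "((\<lambda>k::real \<times> 'b::real_normed_vector. mexp (fst k *\<^sub>R A) $ i $ j) has_derivative
      (\<lambda>v. fst v * (A ** mexp (fst h *\<^sub>R A)) $ i $ j)) (at h)"
  using has_derivative_compose[OF has_derivative_fst[OF has_derivative_ident]
      has_real_derivative_mexp_entry[unfolded has_field_derivative_def]]
  by (simp add: o_def mult.commute)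

lemma has_derivative_mexp_neg_entry_fst:
  "((\<lambda>k::real \<times> 'b::real_normed_vector. mexp ((- fst k) *\<^sub>R A) $ i $ j) has_derivative
      (\<lambda>v. - fst v * (A ** mexp ((- fst h) *\<^sub>R A)) $ i $ j)) (at h)"
  using has_derivative_mexp_entry_fst[of "- A" i j h] by (simp add: matrix_neg_left)

lemma has_derivative_snd_nth:
  "((\<lambda>k::'a::real_normed_vector \<times> (real^'n). snd k $ j) has_derivative (\<lambda>v. snd v $ j)) (at h)"
  by (intro bounded_linear_imp_has_derivative
      bounded_linear_compose[OF bounded_linear_vec_nth bounded_linear_snd])

(* Jacobian matrices of k |-> g * k at h and of k |-> k * h at g, in the coordinates h^1 (None)
   and v^i (Some i). *)
definition left_jacobian ::
  "real^'n^'n \<Rightarrow> real^'n^'n \<Rightarrow> real \<times> (real^'n) \<Rightarrow> real \<times> (real^'n) \<Rightarrow> 'n option \<Rightarrow> 'n option \<Rightarrow> real" where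
  "left_jacobian A B g h a c = (case a of
     None \<Rightarrow> (if c = None then 1 else 0)
   | Some i \<Rightarrow> (case c of
       None \<Rightarrow> - ((B ** mexp ((- fst h) *\<^sub>R B)) *v snd g) $ i
     | Some j \<Rightarrow> mexp (fst g *\<^sub>R A) $ i $ j))"

definition right_jacobian ::
  "real^'n^'n \<Rightarrow> real^'n^'n \<Rightarrow> real \<times> (real^'n) \<Rightarrow> real \<times> (real^'n) \<Rightarrow> 'n option \<Rightarrow> 'n option \<Rightarrow> real" where
  "right_jacobian A B g h a c = (case a of
     None \<Rightarrow> (if c = None then 1 else 0)
   | Some i \<Rightarrow> (case c of
       None \<Rightarrow> ((A ** mexp (fst g *\<^sub>R A)) *v snd h) $ i
     | Some j \<Rightarrow> mexp ((- fst h) *\<^sub>R B) $ i $ j))"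

lemma coord_gmul: "coord (Some i) (gmul A B g h) =
    (\<Sum>j\<in>UNIV. mexp (fst g *\<^sub>R A) $ i $ j * snd h $ j)
    + (\<Sum>j\<in>UNIV. mexp ((- fst h) *\<^sub>R B) $ i $ j * snd g $ j)"
  by (simp add: gmul_def matrix_vector_mult_def)

lemma has_derivative_left_translation:
  "((\<lambda>k. coord a (gmul A B g k)) has_derivative
      (\<lambda>v. \<Sum>c\<in>UNIV. left_jacobian A B g h a c * coord c v)) (at h)"
proof (cases a)
  case None
  then show ?thesis
    by (simp add: gmul_def left_jacobian_def sum_UNIV_option)
      (auto intro!: derivative_eq_intros)
next
  case (Some i)
  have "((\<lambda>k. coord a (gmul A B g k)) has_derivative (\<lambda>v.
      (\<Sum>j\<in>UNIV. mexp (fst g *\<^sub>R A) $ i $ j * snd v $ j) +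
      (\<Sum>j\<in>UNIV. - fst v * (B ** mexp ((- fst h) *\<^sub>R B)) $ i $ j * snd g $ j))) (at h)"
    unfolding Some coord_gmul
    by (intro has_derivative_add has_derivative_sum has_derivative_mult_right
        has_derivative_mult_left has_derivative_snd_nth has_derivative_mexp_neg_entry_fst)
  then show ?thesis
    by (rule has_derivative_eq_rhs)
      (simp add: Some fun_eq_iff left_jacobian_def sum_UNIV_option matrix_vector_mult_def
        sum_distrib_left sum_distrib_right sum_negf mult_ac)
qed

lemma has_derivative_right_translation:
  "((\<lambda>k. coord a (gmul A B k h)) has_derivative
      (\<lambda>v. \<Sum>c\<in>UNIV. right_jacobian A B g h a c * coord c v)) (at g)"
proof (cases a)
  case None
  then show ?thesis
    by (simp add: gmul_def right_jacobian_def sum_UNIV_option)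
      (auto intro!: derivative_eq_intros)
next
  case (Some i)
  have "((\<lambda>k. coord a (gmul A B k h)) has_derivative (\<lambda>v.
      (\<Sum>j\<in>UNIV. fst v * (A ** mexp (fst g *\<^sub>R A)) $ i $ j * snd h $ j) +
      (\<Sum>j\<in>UNIV. mexp ((- fst h) *\<^sub>R B) $ i $ j * snd v $ j))) (at g)"
    unfolding Some coord_gmul
    by (intro has_derivative_add has_derivative_sum has_derivative_mult_right
        has_derivative_mult_left has_derivative_snd_nth has_derivative_mexp_entry_fst)
  then show ?thesis
    by (rule has_derivative_eq_rhs)
      (simp add: Some fun_eq_iff right_jacobian_def sum_UNIV_option matrix_vector_mult_def
        sum_distrib_left sum_distrib_right mult_ac)
qed

lemma multiplicative_iff_jacobians:
  "multiplicative A B P \<longleftrightarrow> (\<forall>g h a b. P (gmul A B g h) a b =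
      (\<Sum>c\<in>UNIV. \<Sum>d\<in>UNIV. left_jacobian A B g h a c * left_jacobian A B g h b d * P h c d)
    + (\<Sum>c\<in>UNIV. \<Sum>d\<in>UNIV. right_jacobian A B g h a c * right_jacobian A B g h b d * P g c d))"
  unfolding multiplicative_def
    pd_eq_of_has_derivative[OF has_derivative_left_translation]
    pd_eq_of_has_derivative[OF has_derivative_right_translation] ..

section \<open>The claimed bracket is Poisson-Lie\<close>

definition bracket_matrix ::
  "real^'n^'n \<Rightarrow> real^'n^'n \<Rightarrow> ('n::finite \<Rightarrow> 'n \<Rightarrow> 'n \<Rightarrow> real) \<Rightarrow> real^'n^'n
    \<Rightarrow> real \<times> (real^'n) \<Rightarrow> real^'n^'n" where
  "bracket_matrix A B C W p = Omega A B W (fst p) + lie_poisson_matrix C (snd p)"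

lemma claimed_bracket_eq:
  "claimed_bracket A B C W p a b =
    (case (a, b) of (Some i, Some j) \<Rightarrow> bracket_matrix A B C W p $ i $ j | _ \<Rightarrow> 0)"
  by (cases a; cases b) (simp_all add: bracket_matrix_def lie_poisson_matrix_def)

lemma congruence_entry:
  "congruence E X $ i $ j = (\<Sum>c\<in>UNIV. \<Sum>d\<in>UNIV. E $ i $ c * E $ j $ d * X $ c $ d)"
proof -
  have "congruence E X $ i $ j = (\<Sum>d\<in>UNIV. \<Sum>c\<in>UNIV. E $ i $ c * X $ c $ d * E $ j $ d)"
    by (simp add: congruence_def matrix_matrix_mult_def transpose_def sum_distrib_right)
  also have "\<dots> = (\<Sum>c\<in>UNIV. \<Sum>d\<in>UNIV. E $ i $ c * X $ c $ d * E $ j $ d)"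
    by (rule sum.swap)
  finally show ?thesis
    by (simp add: mult_ac)
qed

lemma bracket_matrix_gmul:
  assumes AB: "A ** B = B ** A" and A: "is_derivation C A" and B: "is_derivation C B"
  shows "bracket_matrix A B C W (gmul A B g h) =
    congruence (mexp (fst g *\<^sub>R A)) (bracket_matrix A B C W h)
    + congruence (mexp ((- fst h) *\<^sub>R B)) (bracket_matrix A B C W g)"
  unfolding bracket_matrix_def gmul_def fst_conv snd_conv Omega_add[OF AB]
    linear_add[OF linear_lie_poisson_matrix] lie_poisson_matrix_mexp[OF A] lie_poisson_matrix_mexp[OF B]
  by (simp add: congruence_def matrix_ring_simps)

lemma multiplicative_claimed_bracket:
  fixes A B W :: "real^'n^'n"
  assumes AB: "A ** B = B ** A" and A: "is_derivation C A" and B: "is_derivation C B"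
  shows "multiplicative A B (claimed_bracket A B C W)"
  unfolding multiplicative_iff_jacobians
proof (intro allI)
  fix g h :: "real \<times> (real^'n)" and a b :: "'n option"
  show "claimed_bracket A B C W (gmul A B g h) a b =
      (\<Sum>c\<in>UNIV. \<Sum>d\<in>UNIV. left_jacobian A B g h a c * left_jacobian A B g h b d * claimed_bracket A B C W h c d)
    + (\<Sum>c\<in>UNIV. \<Sum>d\<in>UNIV. right_jacobian A B g h a c * right_jacobian A B g h b d * claimed_bracket A B C W g c d)"
    unfolding claimed_bracket_eq bracket_matrix_gmul[OF AB A B]
    by (cases a; cases b)
      (simp_all add: sum_UNIV_option left_jacobian_def right_jacobian_def congruence_entry)
qed

definition omega_state ::
  "real^'n^'n \<Rightarrow> real^'n^'n \<Rightarrow> real^'n^'n \<Rightarrow> real \<Rightarrow> (real^'n^'n) \<times> (real^'n^'n)" where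
  "omega_state A B W t = (Omega A B W t, congruence (mexp (t *\<^sub>R A)) W)"

definition omega_generator ::
  "real^'n^'n \<Rightarrow> real^'n^'n \<Rightarrow> (real^'n^'n) \<times> (real^'n^'n) \<Rightarrow> (real^'n^'n) \<times> (real^'n^'n)" where
  "omega_generator A B z =
     (- (B ** fst z) - fst z ** transpose B + snd z, A ** snd z + snd z ** transpose A)"

lemma has_vector_derivative_omega_state:
  assumes AB: "A ** B = B ** A"
  shows "(omega_state A B W has_vector_derivative omega_generator A B (omega_state A B W t)) (at t)"
  unfolding omega_state_def[abs_def] omega_generator_def fst_conv snd_conv
  by (rule has_vector_derivative_Pair[OF has_vector_derivative_Omega[OF AB]
        has_vector_derivative_congruence_mexp])

lemma linear_omega_generator: "linear (omega_generator A B)"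
  by (rule linearI)
    (simp_all add: omega_generator_def matrix_ring_simps matrix_scalar_ac transpose_scalar
      scalar_matrix_assoc[symmetric] algebra_simps)

(* omega_state solves the autonomous linear ODE with generator omega_generator, so the functions
   state_fun are closed under partial differentiation; this gives smoothness of the bracket. *)
definition state_fun ::
  "real^'n^'n \<Rightarrow> real^'n^'n \<Rightarrow> real^'n^'n \<Rightarrow> ((real^'n^'n) \<times> (real^'n^'n) \<Rightarrow> real) \<Rightarrow> real^'n \<Rightarrow> real
    \<Rightarrow> real \<times> (real^'n) \<Rightarrow> real" where
  "state_fun A B W l c d p = l (omega_state A B W (fst p)) + c \<bullet> snd p + d"

lemma has_derivative_state_fun:
  assumes AB: "A ** B = B ** A" and l: "linear l"
  shows "(state_fun A B W l c d has_derivative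
      (\<lambda>v. fst v * l (omega_generator A B (omega_state A B W (fst p))) + c \<bullet> snd v)) (at p)"
proof -
  have "((\<lambda>q. omega_state A B W (fst q)) has_derivative
      (\<lambda>v. fst v *\<^sub>R omega_generator A B (omega_state A B W (fst p)))) (at p)"
    using has_derivative_compose[OF has_derivative_fst[OF has_derivative_ident]
        has_vector_derivative_omega_state[OF AB, of W "fst p", unfolded has_vector_derivative_def]]
    by (simp add: o_def)
  from linear_conv_bounded_linear[THEN iffD1, OF l, THEN bounded_linear.has_derivative, OF this]
  have "((\<lambda>q. l (omega_state A B W (fst q))) has_derivative
      (\<lambda>v. fst v * l (omega_generator A B (omega_state A B W (fst p))))) (at p)"
    by (simp add: linear_scale[OF l])
  then show ?thesis
    unfolding state_fun_def
    by (auto intro!: derivative_eq_intros)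
qed

lemma Ck_state_fun:
  fixes A B W :: "real^'n^'n"
  assumes AB: "A ** B = B ** A"
  shows "linear l \<Longrightarrow> Ck k (state_fun A B W l c d)"
proof (induction k arbitrary: l c d)
  case 0
  show ?case
    using has_derivative_continuous[OF has_derivative_state_fun[OF AB 0]]
    by (simp add: continuous_at_imp_continuous_on)
next
  case (Suc k)
  note deriv = has_derivative_state_fun[OF AB Suc.prems]
  have "Ck k (\<lambda>p. frechet_derivative (state_fun A B W l c d) (at p) b)" for b :: "real \<times> (real^'n)"
  proof -
    have "(\<lambda>p. frechet_derivative (state_fun A B W l c d) (at p) b) =
        state_fun A B W (\<lambda>z. fst b * l (omega_generator A B z)) 0 (c \<bullet> snd b)"
      by (simp add: fun_eq_iff frechet_derivative_at[OF deriv, symmetric] state_fun_def)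
    moreover have "linear (\<lambda>z. fst b * l (omega_generator A B z))"
      using linear_compose[OF linear_compose[OF linear_omega_generator[of A B] Suc.prems]
          linear_times[of "fst b"]]
      by (simp add: o_def)
    ultimately show ?thesis
      using Suc.IH by simp
  qed
  moreover have "continuous_on UNIV (state_fun A B W l c d)"
    using has_derivative_continuous[OF deriv] by (simp add: continuous_at_imp_continuous_on)
  ultimately show ?case
    by (simp add: differentiableI[OF deriv])
qed

lemma claimed_bracket_state_fun:
  "(\<lambda>p. claimed_bracket A B C W p (Some i) (Some j)) =
    state_fun A B W (\<lambda>z. fst z $ i $ j) (\<chi> k. C i j k) 0"
  by (simp add: fun_eq_iff state_fun_def omega_state_def inner_vec_def mult.commute)

lemma smooth_claimed_bracket:
  fixes A B W :: "real^'n^'n"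
  assumes AB: "A ** B = B ** A"
  shows "smooth_fun (\<lambda>p. claimed_bracket A B C W p a b)"
proof (cases "\<exists>i j. a = Some i \<and> b = Some j")
  case True
  then obtain i j where ij: "a = Some i" "b = Some j" by blast
  have "linear (\<lambda>z::(real^'n^'n) \<times> (real^'n^'n). fst z $ i $ j)"
    by (rule linearI) simp_all
  then show ?thesis
    unfolding ij smooth_fun_def claimed_bracket_state_fun by (simp add: Ck_state_fun[OF AB])
next
  case False
  then have "(\<lambda>p. claimed_bracket A B C W p a b) = state_fun A B W (\<lambda>z. 0) 0 0"
    by (cases a; cases b) (auto simp: fun_eq_iff state_fun_def)
  moreover have "linear (\<lambda>z::(real^'n^'n) \<times> (real^'n^'n). 0::real)"
    by (rule linearI) simp_all
  ultimately show ?thesis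
    unfolding smooth_fun_def by (simp add: Ck_state_fun[OF AB])
qed

lemma pd_claimed_bracket:
  fixes A B W :: "real^'n^'n"
  assumes AB: "A ** B = B ** A"
  shows "pd c (\<lambda>q. claimed_bracket A B C W q a b) p =
    (case (a, b) of
      (Some i, Some j) \<Rightarrow> (case c of
          None \<Rightarrow> fst (omega_generator A B (omega_state A B W (fst p))) $ i $ j
        | Some k \<Rightarrow> C i j k)
    | _ \<Rightarrow> 0)"
proof (cases "\<exists>i j. a = Some i \<and> b = Some j")
  case True
  then obtain i j where ij: "a = Some i" "b = Some j" by blast
  have "linear (\<lambda>z::(real^'n^'n) \<times> (real^'n^'n). fst z $ i $ j)"
    by (rule linearI) simp_all
  from has_derivative_state_fun[OF AB this, of W "\<chi> k. C i j k" 0 p]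
  have "((\<lambda>q. claimed_bracket A B C W q a b) has_derivative (\<lambda>v. \<Sum>c\<in>UNIV.
      (case c of None \<Rightarrow> fst (omega_generator A B (omega_state A B W (fst p))) $ i $ j | Some k \<Rightarrow> C i j k)
      * coord c v)) (at p)"
    unfolding ij claimed_bracket_state_fun
    by (rule has_derivative_eq_rhs) (simp add: fun_eq_iff sum_UNIV_option inner_vec_def mult.commute)
  then show ?thesis
    by (simp add: pd_eq_of_has_derivative ij)
next
  case False
  then have "(\<lambda>q. claimed_bracket A B C W q a b) = (\<lambda>q. 0)"
    by (cases a; cases b) (auto simp: fun_eq_iff)
  moreover have "pd c (\<lambda>q::real \<times> (real^'n). 0) p = 0"
    using pd_eq_of_has_derivative[of "\<lambda>q. 0" "\<lambda>c. 0" p c] by simp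
  ultimately show ?thesis
    using False by (cases a; cases b) auto
qed

lemma claimed_bracket_has_cocycle:
  fixes A B W :: "real^'n^'n"
  assumes AB: "A ** B = B ** A"
  shows "has_cocycle C W (claimed_bracket A B C W)"
  unfolding has_cocycle_def pd_claimed_bracket[OF AB]
  by (intro allI, case_tac a; case_tac b; case_tac c)
    (simp_all add: gunit_def omega_state_def omega_generator_def congruence_def)

lemma transpose_lie_poisson_matrix:
  assumes "lie_structure_constants C"
  shows "transpose (lie_poisson_matrix C x) = - lie_poisson_matrix C x"
proof -
  have antisym: "C i j k = - C j i k" for i j k
    using assms unfolding lie_structure_constants_def by blast
  have "transpose (lie_poisson_matrix C x) $ i $ j = (- lie_poisson_matrix C x) $ i $ j" for i j
    using antisym[of j i] by (simp add: lie_poisson_matrix_def transpose_def sum_negf)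
  then show ?thesis
    by (simp add: vec_eq_iff)
qed

lemma bracket_matrix_jacobi:
  assumes J: "lie_structure_constants C" and X: "cocycle_defect C X = 0"
  shows "(\<Sum>m\<in>UNIV. (X + lie_poisson_matrix C x) $ m $ i * C j l m
      + (X + lie_poisson_matrix C x) $ m $ j * C l i m
      + (X + lie_poisson_matrix C x) $ m $ l * C i j m) = 0"
proof -
  have form: "(\<Sum>m\<in>UNIV. X $ m $ i * C j l m + X $ m $ j * C l i m + X $ m $ l * C i j m) =
      cocycle_defect C X $ j $ l $ i"
    by (simp add: cocycle_defect_def bracket_form_def sum.distrib mult.commute)
  let ?M = "lie_poisson_matrix C x"
  have "?M $ m $ i * C j l m + ?M $ m $ j * C l i m + ?M $ m $ l * C i j m =
      (\<Sum>k\<in>UNIV. x $ k * (C j l m * C m i k + C l i m * C m j k + C i j m * C m l k))" for m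
    by (simp add: lie_poisson_matrix_def distrib_left sum.distrib sum_distrib_left sum_distrib_right mult_ac)
  then have "(\<Sum>m\<in>UNIV. ?M $ m $ i * C j l m + ?M $ m $ j * C l i m + ?M $ m $ l * C i j m) =
      (\<Sum>m\<in>UNIV. \<Sum>k\<in>UNIV. x $ k * (C j l m * C m i k + C l i m * C m j k + C i j m * C m l k))"
    by (simp only:)
  also have "\<dots> = (\<Sum>k\<in>UNIV. \<Sum>m\<in>UNIV. x $ k * (C j l m * C m i k + C l i m * C m j k + C i j m * C m l k))"
    by (rule sum.swap)
  also have "\<dots> = (\<Sum>k\<in>UNIV. x $ k * (\<Sum>m\<in>UNIV. C j l m * C m i k + C l i m * C m j k + C i j m * C m l k))"
    by (simp add: sum_distrib_left)
  also have "\<dots> = 0"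
  proof -
    have "(\<Sum>m\<in>UNIV. C i j m * C m l k + C j l m * C m i k + C l i m * C m j k) = 0" for i j l k
      using J unfolding lie_structure_constants_def by blast
    then show ?thesis
      by simp
  qed
  finally show ?thesis
    using form X by (simp add: distrib_right sum.distrib)
qed

lemma transpose_bracket_matrix:
  fixes A B W :: "real^'n^'n"
  assumes J: "lie_structure_constants C" and W: "lie_2cocycle C W" and AB: "A ** B = B ** A"
  shows "transpose (bracket_matrix A B C W p) = - bracket_matrix A B C W p"
  using Omega_antisym[OF AB] W
  by (simp add: bracket_matrix_def transpose_add transpose_lie_poisson_matrix[OF J] lie_2cocycle_iff)

lemma poisson_bivector_claimed_bracket:
  fixes A B W :: "real^'n^'n"
  assumes J: "lie_structure_constants C" and W: "lie_2cocycle C W"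
    and AB: "A ** B = B ** A" and A: "is_derivation C A" and B: "is_derivation C B"
  shows "poisson_bivector (claimed_bracket A B C W)"
  unfolding poisson_bivector_def
proof (intro conjI allI)
  fix a b
  show "smooth_fun (\<lambda>p. claimed_bracket A B C W p a b)"
    by (rule smooth_claimed_bracket[OF AB])
next
  fix p a b
  have entry: "bracket_matrix A B C W p $ j $ i = - bracket_matrix A B C W p $ i $ j" for i j
    using arg_cong[OF transpose_bracket_matrix[OF J W AB, of p], of "\<lambda>X. X $ i $ j"]
    by (simp add: transpose_def)
  show "claimed_bracket A B C W p a b = - claimed_bracket A B C W p b a"
  proof (cases a; cases b)
    fix i j
    assume "a = Some i" "b = Some j"
    then show ?thesis
      using entry[of i j] by (simp add: claimed_bracket_eq)
  qed (simp_all add: claimed_bracket_eq)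
next
  fix p :: "real \<times> (real^'n)" and a b c :: "'n option"
  let ?P = "claimed_bracket A B C W"
  have defect: "cocycle_defect C (Omega A B W (fst p)) = 0"
    using cocycle_defect_Omega[OF AB A B] W by (simp add: lie_2cocycle_iff)
  show "(\<Sum>l\<in>UNIV. ?P p l a * pd l (\<lambda>q. ?P q b c) p + ?P p l b * pd l (\<lambda>q. ?P q c a) p
      + ?P p l c * pd l (\<lambda>q. ?P q a b) p) = 0"
    unfolding pd_claimed_bracket[OF AB] unfolding claimed_bracket_eq
    using bracket_matrix_jacobi[OF J defect]
    by (cases a; cases b; cases c) (simp_all add: sum_UNIV_option bracket_matrix_def)
qed

lemma poisson_lie_claimed_bracket:
  fixes A B W :: "real^'n^'n"
  assumes "lie_structure_constants C" and "lie_2cocycle C W"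
    and "is_derivation C A" and "is_derivation C B" and AB: "A ** B = B ** A"
  shows "poisson_lie_with_cocycle A B C W (claimed_bracket A B C W)"
  unfolding poisson_lie_with_cocycle_def
  using poisson_bivector_claimed_bracket[OF assms(1,2) AB assms(3,4)]
    multiplicative_claimed_bracket[OF AB assms(3,4)] claimed_bracket_has_cocycle[OF AB]
  by blast

section \<open>Uniqueness\<close>

lemma sum_coord_cdir: "(\<Sum>c\<in>UNIV. coord c v *\<^sub>R cdir c) = v"
proof -
  have "(\<Sum>i\<in>UNIV. snd v $ i *\<^sub>R axis i (1::real)) = snd v"
    by (simp add: vec_eq_iff sum_component axis_def if_distrib cong: if_cong)
  then show ?thesis
    by (simp add: sum_UNIV_option prod_eq_iff fst_sum snd_sum)
qed

lemma has_derivative_zero_if_pd_zero: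
  assumes f: "f differentiable (at p)" and pd: "\<And>c. pd c f p = 0"
  shows "(f has_derivative (\<lambda>v. 0)) (at p)"
proof -
  let ?L = "frechet_derivative f (at p)"
  have L: "(f has_derivative ?L) (at p)"
    using f by (rule frechet_derivative_works[THEN iffD1])
  have "?L v = (\<Sum>c\<in>UNIV. coord c v * pd c f p)" for v
    using linear_sum[OF has_derivative_linear[OF L], of "\<lambda>c. coord c v *\<^sub>R cdir c" UNIV]
    by (simp add: sum_coord_cdir linear_scale[OF has_derivative_linear[OF L]] pd_def)
  with pd have "?L = (\<lambda>v. 0)"
    by (simp add: fun_eq_iff)
  with L show ?thesis
    by simp
qed

lemma smooth_fun_differentiable: "smooth_fun f \<Longrightarrow> f differentiable (at p)"
  unfolding smooth_fun_def by (metis Ck.simps(2))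

lemma multiplicative_diff:
  assumes "multiplicative A B P" "multiplicative A B Q"
  shows "multiplicative A B (\<lambda>p a b. P p a b - Q p a b)"
  using assms unfolding multiplicative_iff_jacobians
  by (simp add: right_diff_distrib sum_subtractf)

lemma differentiable_mexp_neg_entry_fst:
  "(\<lambda>h::real \<times> 'b::real_normed_vector. mexp (- (fst h *\<^sub>R A)) $ i $ j) differentiable (at h0)"
  using differentiableI[OF has_derivative_mexp_neg_entry_fst] by simp

lemma differentiable_left_jacobian: "(\<lambda>h. left_jacobian A B g h a c) differentiable (at h0)"
  by (cases a; cases c)
    (auto simp: left_jacobian_def matrix_vector_mult_def matrix_matrix_mult_def
      intro!: derivative_intros differentiable_mexp_neg_entry_fst)

lemma differentiable_right_jacobian: "(\<lambda>h. right_jacobian A B g h a c) differentiable (at h0)"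
  by (cases a; cases c)
    (auto simp: right_jacobian_def matrix_vector_mult_def
      intro!: derivative_intros differentiable_mexp_neg_entry_fst
        differentiableI[OF has_derivative_snd_nth])

(* Differentiating the equation at sigma = 0 gives the constant-coefficient ODE u'(s) = r'(0) u(s). *)
lemma translation_equation_zero:
  fixes u :: "real \<Rightarrow> 'a::finite \<Rightarrow> 'a \<Rightarrow> real"
  assumes eq: "\<And>s \<sigma> a b. u (s + \<sigma>) a b =
      (\<Sum>c\<in>UNIV. \<Sum>d\<in>UNIV. l s \<sigma> a b c d * u \<sigma> c d) + (\<Sum>c\<in>UNIV. \<Sum>d\<in>UNIV. r \<sigma> a b c d * u s c d)"
    and u0: "\<And>a b. u 0 a b = 0" and u': "\<And>a b. ((\<lambda>\<sigma>. u \<sigma> a b) has_real_derivative 0) (at 0)"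
    and l: "\<And>s a b c d. (\<lambda>\<sigma>. l s \<sigma> a b c d) differentiable (at 0)"
    and r: "\<And>a b c d. (\<lambda>\<sigma>. r \<sigma> a b c d) differentiable (at 0)"
  shows "u s a b = 0"
proof -
  define r' where "r' a b c d = (SOME e. ((\<lambda>\<sigma>. r \<sigma> a b c d) has_real_derivative e) (at 0))" for a b c d
  have r': "((\<lambda>\<sigma>. r \<sigma> a b c d) has_real_derivative r' a b c d) (at 0)" for a b c d
    unfolding r'_def using r[of a b c d] unfolding real_differentiable_def by (rule someI_ex)
  have "((\<lambda>\<sigma>. u (\<sigma> + s) a b) has_real_derivative (\<Sum>c\<in>UNIV. \<Sum>d\<in>UNIV. r' a b c d * u s c d)) (at 0)"
    for s a b
  proof -
    have lu: "((\<lambda>\<sigma>. l s \<sigma> a b c d * u \<sigma> c d) has_real_derivative 0) (at 0)" for c d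
    proof -
      obtain l' where "((\<lambda>\<sigma>. l s \<sigma> a b c d) has_real_derivative l') (at 0)"
        using l[of s a b c d] by (rule real_differentiableE)
      from DERIV_mult[OF this u'[of c d]] show ?thesis
        by (simp add: u0)
    qed
    show ?thesis
      unfolding add.commute[of _ s] eq
      by (rule DERIV_cong[OF DERIV_add[OF DERIV_sum[OF DERIV_sum[OF lu]]
            DERIV_sum[OF DERIV_sum[OF DERIV_cmult_right[OF r']]]]]) simp
  qed
  then have "((\<lambda>t. u t a b) has_real_derivative (\<Sum>c\<in>UNIV. \<Sum>d\<in>UNIV. r' a b c d * u s c d)) (at s)"
    for s a b
    using DERIV_shift[of "\<lambda>t. u t a b" _ 0 s] by simp
  then have deriv: "((\<lambda>s. \<chi> a b. u s a b) has_vector_derivative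
      (\<lambda>X. \<chi> a b. \<Sum>c\<in>UNIV. \<Sum>d\<in>UNIV. r' a b c d * X $ c $ d) (\<chi> a b. u s a b)) (at s)" for s
    by (intro has_vector_derivative_matrixI) simp
  have bl: "bounded_linear (\<lambda>X::real^'a^'a. \<chi> a b. \<Sum>c\<in>UNIV. \<Sum>d\<in>UNIV. r' a b c d * X $ c $ d)"
    unfolding linear_conv_bounded_linear[symmetric]
    by (rule linearI) (simp_all add: vec_eq_iff distrib_left sum.distrib sum_distrib_left mult_ac)
  have "(\<chi> a b. u s a b) = 0"
    by (rule linear_ode_zero[OF bl deriv]) (simp add: vec_eq_iff u0)
  then show ?thesis
    by (simp add: vec_eq_iff)
qed

lemma left_jacobian_gunit: "left_jacobian A B gunit gunit a c = of_bool (a = c)"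
  by (cases a; cases c) (simp_all add: left_jacobian_def gunit_def mat_def)

lemma right_jacobian_gunit: "right_jacobian A B gunit gunit a c = of_bool (a = c)"
  by (cases a; cases c) (simp_all add: right_jacobian_def gunit_def mat_def)

lemma multiplicative_vanishes_at_gunit:
  assumes "multiplicative A B D"
  shows "D gunit a b = 0"
proof -
  have "gmul A B gunit gunit = gunit"
    by (simp add: gmul_def gunit_def)
  then have "D gunit a b = D gunit a b + D gunit a b"
    using assms[unfolded multiplicative_iff_jacobians, rule_format, of gunit gunit a b]
    by (simp add: left_jacobian_gunit right_jacobian_gunit mult.assoc flip: sum_distrib_left)
  then show ?thesis
    by simp
qed

lemma multiplicative_vanishes_on_subgroup:
  fixes D :: "'n::finite bivector" and \<gamma> :: "real \<Rightarrow> real \<times> (real^'n)"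
  assumes D: "multiplicative A B D"
    and dD: "\<And>a b. ((\<lambda>p. D p a b) has_derivative (\<lambda>v. 0)) (at gunit)"
    and hom: "\<And>s \<sigma>. gmul A B (\<gamma> s) (\<gamma> \<sigma>) = \<gamma> (s + \<sigma>)"
    and \<gamma>0: "\<gamma> 0 = gunit" and \<gamma>: "\<gamma> differentiable (at 0)"
    \<comment> \<open>so that the ODE along the subgroup has constant coefficients\<close>
    and right: "\<And>s \<sigma> a c. right_jacobian A B (\<gamma> s) (\<gamma> \<sigma>) a c = right_jacobian A B gunit (\<gamma> \<sigma>) a c"
  shows "D (\<gamma> s) a b = 0"
proof (rule translation_equation_zero[where u = "\<lambda>s a b. D (\<gamma> s) a b"
      and l = "\<lambda>s \<sigma> a b c d. left_jacobian A B (\<gamma> s) (\<gamma> \<sigma>) a c * left_jacobian A B (\<gamma> s) (\<gamma> \<sigma>) b d"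
      and r = "\<lambda>\<sigma> a b c d. right_jacobian A B gunit (\<gamma> \<sigma>) a c * right_jacobian A B gunit (\<gamma> \<sigma>) b d"])
  fix s \<sigma> a b
  show "D (\<gamma> (s + \<sigma>)) a b =
      (\<Sum>c\<in>UNIV. \<Sum>d\<in>UNIV. left_jacobian A B (\<gamma> s) (\<gamma> \<sigma>) a c * left_jacobian A B (\<gamma> s) (\<gamma> \<sigma>) b d * D (\<gamma> \<sigma>) c d)
    + (\<Sum>c\<in>UNIV. \<Sum>d\<in>UNIV. right_jacobian A B gunit (\<gamma> \<sigma>) a c * right_jacobian A B gunit (\<gamma> \<sigma>) b d * D (\<gamma> s) c d)"
    using D[unfolded multiplicative_iff_jacobians, rule_format, of "\<gamma> s" "\<gamma> \<sigma>" a b]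
    by (simp add: hom right)
next
  fix a b
  show "D (\<gamma> 0) a b = 0"
    using multiplicative_vanishes_at_gunit[OF D] by (simp add: \<gamma>0)
  obtain \<gamma>' where "(\<gamma> has_derivative \<gamma>') (at 0)"
    using \<gamma> by (auto simp: differentiable_def)
  from has_derivative_compose[OF this dD[of a b, folded \<gamma>0]]
  show "((\<lambda>\<sigma>. D (\<gamma> \<sigma>) a b) has_real_derivative 0) (at 0)"
    unfolding has_field_derivative_def by (rule has_derivative_eq_rhs) (simp add: fun_eq_iff)
next
  fix s a b c d
  show "(\<lambda>\<sigma>. left_jacobian A B (\<gamma> s) (\<gamma> \<sigma>) a c * left_jacobian A B (\<gamma> s) (\<gamma> \<sigma>) b d) differentiable (at 0)"
    using differentiable_chain_at[OF \<gamma> differentiable_left_jacobian]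
    by (simp add: o_def)
  show "(\<lambda>\<sigma>. right_jacobian A B gunit (\<gamma> \<sigma>) a c * right_jacobian A B gunit (\<gamma> \<sigma>) b d) differentiable (at 0)"
    using differentiable_chain_at[OF \<gamma> differentiable_right_jacobian]
    by (simp add: o_def)
qed

lemma multiplicative_eq_zero:
  fixes D :: "'n::finite bivector"
  assumes D: "multiplicative A B D" and dD: "\<And>a b. ((\<lambda>p. D p a b) has_derivative (\<lambda>v. 0)) (at gunit)"
  shows "D p a b = 0"
proof -
  note subgroup = multiplicative_vanishes_on_subgroup[OF D dD]
  have time: "D (t, 0) a b = 0" for t a b
  proof (rule subgroup[where \<gamma> = "\<lambda>s. (s, 0)"])
    show "(\<lambda>s::real. (s, 0::real^'n)) differentiable (at 0)"
      by (rule differentiableI[OF has_derivative_Pair[OF has_derivative_ident has_derivative_const]])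
    show "right_jacobian A B (s, 0) (\<sigma>, 0) a c = right_jacobian A B gunit (\<sigma>, 0) a c" for s \<sigma> a c
      by (cases a; cases c) (simp_all add: right_jacobian_def gunit_def)
  qed (simp_all add: gmul_def gunit_def)
  have space: "D (0, y) a b = 0" for y a b
  proof -
    have "D (0, 1 *\<^sub>R y) a b = 0"
    proof (rule subgroup[where \<gamma> = "\<lambda>s. (0, s *\<^sub>R y)"])
      show "(\<lambda>s. (0::real, s *\<^sub>R y)) differentiable (at 0)"
        by (rule differentiableI[OF has_derivative_Pair[OF has_derivative_const
              bounded_linear_imp_has_derivative[OF bounded_linear_scaleR_left]]])
      show "right_jacobian A B (0, s *\<^sub>R y) (0, \<sigma> *\<^sub>R y) a c = right_jacobian A B gunit (0, \<sigma> *\<^sub>R y) a c"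
        for s \<sigma> a c
        by (cases a; cases c) (simp_all add: right_jacobian_def gunit_def)
    qed (simp_all add: gmul_def gunit_def scaleR_add_left)
    then show ?thesis
      by simp
  qed
  obtain t x where p: "p = (t, x)"
    by fastforce
  have "gmul A B (0, mexp (t *\<^sub>R B) *v x) (t, 0) = p"
    using mexp_neg_mult[of t B] by (simp add: p gmul_def matrix_vector_mul_assoc)
  then show ?thesis
    using D[unfolded multiplicative_iff_jacobians, rule_format, of "(0, mexp (t *\<^sub>R B) *v x)" "(t, 0)" a b]
    by (simp add: time space)
qed

lemma pd_diff:
  assumes "f differentiable (at p)" "g differentiable (at p)"
  shows "pd c (\<lambda>x. f x - g x) p = pd c f p - pd c g p"
  unfolding pd_def
    frechet_derivative_at[OF has_derivative_diff[OF assms[THEN frechet_derivative_works[THEN iffD1]]],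
      symmetric]
  ..

theorem poisson_lie_with_cocycle_unique:
  assumes P: "poisson_lie_with_cocycle A B C W P" and Q: "poisson_lie_with_cocycle A B C W Q"
  shows "P = Q"
proof -
  let ?D = "\<lambda>p a b. P p a b - Q p a b"
  have "smooth_fun (\<lambda>p. P p a b)" "smooth_fun (\<lambda>p. Q p a b)" for a b
    using P Q unfolding poisson_lie_with_cocycle_def poisson_bivector_def by blast+
  then have diff: "(\<lambda>p. P p a b) differentiable (at p)" "(\<lambda>p. Q p a b) differentiable (at p)" for a b p
    by (simp_all add: smooth_fun_differentiable)
  have "multiplicative A B ?D"
    using P Q unfolding poisson_lie_with_cocycle_def by (blast intro: multiplicative_diff)
  moreover have "((\<lambda>p. ?D p a b) has_derivative (\<lambda>v. 0)) (at gunit)" for a b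
  proof (rule has_derivative_zero_if_pd_zero)
    show "(\<lambda>p. ?D p a b) differentiable (at gunit)"
      using diff by (rule differentiable_diff)
    have "has_cocycle C W P" "has_cocycle C W Q"
      using P Q unfolding poisson_lie_with_cocycle_def by blast+
    then show "pd c (\<lambda>p. ?D p a b) gunit = 0" for c
      by (simp add: pd_diff[OF diff] has_cocycle_def)
  qed
  ultimately have "?D p a b = 0" for p a b
    by (rule multiplicative_eq_zero)
  then show ?thesis
    by (simp add: fun_eq_iff)
qed

theorem theorem1:
  fixes C :: "'n::finite \<Rightarrow> 'n \<Rightarrow> 'n \<Rightarrow> real"
    and W A B :: "real^'n^'n"
  assumes "lie_structure_constants C"
    and "lie_2cocycle C W"
    and "is_derivation C A"
    and "is_derivation C B"
    and "A ** B = B ** A"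
  shows "poisson_lie_with_cocycle A B C W (claimed_bracket A B C W)
         \<and> (\<forall>P. poisson_lie_with_cocycle A B C W P \<longrightarrow> P = claimed_bracket A B C W)"
  using poisson_lie_claimed_bracket[OF assms] poisson_lie_with_cocycle_unique by blast

end
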